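(* Suppose $\mathcal M$ is stable under regular maps. Let \[1\to P \to G \to Q\to 1\] be a short exact sequence of countable groups. Assume $G$ is equipped with a uniformly discrete proper left-invariant metric, and that each finitely generated subgroup of $P$, equipped with the induced metric belongs to $\mathcal M$, and that $Q$ is equipped with the quotient metric. Then $\overline{\operatorname{asdim}}_{\mathcal M}(G)\leq \operatorname{asdim}(Q)$.
   Context: $\mathcal M$ is a class of metric families (collections of $1$-uniformly discrete bounded geometry metric spaces), stable under regular maps (uniformly Lipschitz maps with uniformly bounded preimage cardinalities); a space $X$ belongs to $\mathcal M$ if $\{X\}\in\mathcal M$. $\operatorname{asdim}$ is the usual asymptotic dimension. $\overline{\operatorname{asdim}}_{\mathcal M}(G)$ is the least $d$ such that for every $r$, $G=X_0\cup\dots\cup X_d$ with each $X_i$ a union of pieces pairwise at distance at least $r$, such that, with $\mathcal Z$ the family of pieces, $N^m_s(\mathcal Z)\in\mathcal M$ for all $m,s\geq1$, where $N^0_s(Z)=Z$ and $N^{k+1}_s(Z)$ is the union of all $Z'\in\mathcal Z$ meeting the closed $s$-neighbourhood of $N^k_s(Z)$. *)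

theory Defs
  imports "HOL-Algebra.Algebra" "HOL-Library.Extended_Nat"
begin

text \<open>A metric space is represented by a carrier set together with a distance function.
  A metric family is a set of such spaces (all with points in the same type).\<close>

type_synonym 'a mspace = "'a set \<times> ('a \<Rightarrow> 'a \<Rightarrow> real)"

definition is_metric :: "'a set \<Rightarrow> ('a \<Rightarrow> 'a \<Rightarrow> real) \<Rightarrow> bool" where
  "is_metric S d \<longleftrightarrow>
     (\<forall>x\<in>S. \<forall>y\<in>S. 0 \<le> d x y \<and> (d x y = 0 \<longleftrightarrow> x = y) \<and> d x y = d y x) \<and>
     (\<forall>x\<in>S. \<forall>y\<in>S. \<forall>z\<in>S. d x z \<le> d x y + d y z)"

definition metric_family :: "'a mspace set \<Rightarrow> bool" where
  "metric_family F \<longleftrightarrow>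
     (\<forall>(S, d)\<in>F. is_metric S d \<and> (\<forall>x\<in>S. \<forall>y\<in>S. x \<noteq> y \<longrightarrow> 1 \<le> d x y)) \<and>
     (\<forall>r::real. \<exists>N::nat. \<forall>(S, d)\<in>F. \<forall>x\<in>S.
        finite {y\<in>S. d x y \<le> r} \<and> card {y\<in>S. d x y \<le> r} \<le> N)"

definition regular_maps_to :: "'a mspace set \<Rightarrow> 'a mspace set \<Rightarrow> bool" where
  "regular_maps_to F' F \<longleftrightarrow>
     (\<exists>L::real. \<exists>K::nat. \<forall>(S, dS)\<in>F'. \<exists>(T, dT)\<in>F. \<exists>f. f ` S \<subseteq> T \<and>
        (\<forall>x\<in>S. \<forall>x'\<in>S. dT (f x) (f x') \<le> L * dS x x') \<and>
        (\<forall>y\<in>T. finite {x\<in>S. f x = y} \<and> card {x\<in>S. f x = y} \<le> K))"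

definition class_of_metric_families :: "('a mspace set \<Rightarrow> bool) \<Rightarrow> bool" where
  "class_of_metric_families \<M> \<longleftrightarrow> (\<forall>F. \<M> F \<longrightarrow> metric_family F)"

definition stable_under_regular_maps :: "('a mspace set \<Rightarrow> bool) \<Rightarrow> bool" where
  "stable_under_regular_maps \<M> \<longleftrightarrow>
     (\<forall>F F'. \<M> F \<longrightarrow> metric_family F' \<longrightarrow> regular_maps_to F' F \<longrightarrow> \<M> F')"

definition space_in :: "('a mspace set \<Rightarrow> bool) \<Rightarrow> 'a set \<Rightarrow> ('a \<Rightarrow> 'a \<Rightarrow> real) \<Rightarrow> bool" where
  "space_in \<M> S d \<longleftrightarrow> \<M> {(S, d)}"

definition r_separated :: "('a \<Rightarrow> 'a \<Rightarrow> real) \<Rightarrow> real \<Rightarrow> 'a set set \<Rightarrow> bool" where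
  "r_separated d r U \<longleftrightarrow>
     (\<forall>A\<in>U. \<forall>B\<in>U. A \<noteq> B \<longrightarrow> (\<forall>a\<in>A. \<forall>b\<in>B. r \<le> d a b))"

definition asdim_le :: "'a set \<Rightarrow> ('a \<Rightarrow> 'a \<Rightarrow> real) \<Rightarrow> nat \<Rightarrow> bool" where
  "asdim_le S d n \<longleftrightarrow>
     (\<forall>r>0. \<exists>U :: nat \<Rightarrow> 'a set set.
        S = (\<Union>i\<le>n. \<Union>(U i)) \<and>
        (\<forall>i\<le>n. r_separated d r (U i)) \<and>
        (\<exists>D. \<forall>i\<le>n. \<forall>A\<in>U i. \<forall>x\<in>A. \<forall>y\<in>A. d x y \<le> D))"

definition asdim :: "'a set \<Rightarrow> ('a \<Rightarrow> 'a \<Rightarrow> real) \<Rightarrow> enat" where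
  "asdim S d = Inf (enat ` {n. asdim_le S d n})"

definition closed_nbhd :: "'a set \<Rightarrow> ('a \<Rightarrow> 'a \<Rightarrow> real) \<Rightarrow> real \<Rightarrow> 'a set \<Rightarrow> 'a set" where
  "closed_nbhd S d s A = {x\<in>S. \<exists>a\<in>A. d x a \<le> s}"

fun iter_nbhd :: "'a set \<Rightarrow> ('a \<Rightarrow> 'a \<Rightarrow> real) \<Rightarrow> 'a set set \<Rightarrow> nat \<Rightarrow> real \<Rightarrow> 'a set \<Rightarrow> 'a set" where
  "iter_nbhd S d Zs 0 s Z = Z"
| "iter_nbhd S d Zs (Suc k) s Z =
     \<Union>{Z'\<in>Zs. Z' \<inter> closed_nbhd S d s (iter_nbhd S d Zs k s Z) \<noteq> {}}"

definition nbhd_family :: "'a set \<Rightarrow> ('a \<Rightarrow> 'a \<Rightarrow> real) \<Rightarrow> 'a set set \<Rightarrow> nat \<Rightarrow> real \<Rightarrow> 'a mspace set" where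
  "nbhd_family S d Zs m s = {(iter_nbhd S d Zs m s Z, d) | Z. Z \<in> Zs}"

definition asdim_M_le :: "('a mspace set \<Rightarrow> bool) \<Rightarrow> 'a set \<Rightarrow> ('a \<Rightarrow> 'a \<Rightarrow> real) \<Rightarrow> nat \<Rightarrow> bool" where
  "asdim_M_le \<M> S d n \<longleftrightarrow>
     (\<forall>r>0. \<exists>U :: nat \<Rightarrow> 'a set set.
        S = (\<Union>i\<le>n. \<Union>(U i)) \<and>
        (\<forall>i\<le>n. r_separated d r (U i)) \<and>
        (\<forall>m::nat. \<forall>s::nat. 1 \<le> m \<longrightarrow> 1 \<le> s \<longrightarrow>
            \<M> (nbhd_family S d (\<Union>i\<le>n. U i) m (real s))))"

definition asdim_M :: "('a mspace set \<Rightarrow> bool) \<Rightarrow> 'a set \<Rightarrow> ('a \<Rightarrow> 'a \<Rightarrow> real) \<Rightarrow> enat" where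
  "asdim_M \<M> S d = Inf (enat ` {n. asdim_M_le \<M> S d n})"

definition uniformly_discrete_proper_left_inv ::
  "('g, 'm) monoid_scheme \<Rightarrow> ('g \<Rightarrow> 'g \<Rightarrow> real) \<Rightarrow> bool" where
  "uniformly_discrete_proper_left_inv G d \<longleftrightarrow>
     is_metric (carrier G) d \<and>
     (\<forall>x\<in>carrier G. \<forall>y\<in>carrier G. x \<noteq> y \<longrightarrow> 1 \<le> d x y) \<and>
     (\<forall>x\<in>carrier G. \<forall>r::real. finite {y\<in>carrier G. d x y \<le> r}) \<and>
     (\<forall>g\<in>carrier G. \<forall>x\<in>carrier G. \<forall>y\<in>carrier G. d (g \<otimes>\<^bsub>G\<^esub> x) (g \<otimes>\<^bsub>G\<^esub> y) = d x y)"

definition quotient_metric ::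
  "('g, 'm) monoid_scheme \<Rightarrow> ('g \<Rightarrow> 'g \<Rightarrow> real) \<Rightarrow> ('g \<Rightarrow> 'q) \<Rightarrow> 'q \<Rightarrow> 'q \<Rightarrow> real" where
  "quotient_metric G d \<phi> q q' =
     Inf {d g g' | g g'. g \<in> carrier G \<and> g' \<in> carrier G \<and> \<phi> g = q \<and> \<phi> g' = q'}"

definition finitely_generated_subgroup :: "('p, 'n) monoid_scheme \<Rightarrow> 'p set \<Rightarrow> bool" where
  "finitely_generated_subgroup P H \<longleftrightarrow>
     (\<exists>S. finite S \<and> S \<subseteq> carrier P \<and> H = generate P S)"

end

theory Submission
  imports Defs
begin

text \<open>Pull back an \<open>r\<close>-cover of \<open>Q\<close> witnessing \<open>asdim Q \<le> n\<close> along \<open>\<phi>\<close> and split each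
  colour class into its \<open>r\<close>-chain components. These are \<open>r\<close>-separated, and each projects
  into a single bounded piece of \<open>Q\<close>, so any two of its points lie in cosets of \<open>P\<close> that come
  within a fixed distance \<open>E\<close>. The same holds, with a larger \<open>E\<close>, for the iterated
  neighbourhoods \<open>N\<^sup>m\<^sub>s(Z)\<close>, which stay \<open>max r s\<close>-chain connected. Walking along such
  chains from a base point \<open>x\<close> writes every point as \<open>x \<iota>(k) c\<close> with \<open>|c| \<le> E\<close> and \<open>k\<close> in
  the subgroup \<open>H\<close> of \<open>P\<close> generated by the finitely many \<open>p\<close> with \<open>|\<iota>(p)| \<le> L + 2E\<close>.
  Then \<open>x \<iota>(k) c \<mapsto> \<iota>(k)\<close> is a regular map from the whole family of neighbourhoods into the
  single space \<open>\<iota>(H)\<close>, which lies in \<open>\<M>\<close> by hypothesis.\<close>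

definition chain_connected :: "('a \<Rightarrow> 'a \<Rightarrow> real) \<Rightarrow> real \<Rightarrow> 'a set \<Rightarrow> bool" where
  "chain_connected d L Y \<longleftrightarrow>
     (\<forall>Y'. Y' \<subseteq> Y \<longrightarrow> Y' \<noteq> {} \<longrightarrow> (\<forall>y\<in>Y'. \<forall>y'\<in>Y. d y y' \<le> L \<longrightarrow> y' \<in> Y') \<longrightarrow> Y' = Y)"

lemma chain_connectedD:
  assumes "chain_connected d L Y" "Y' \<subseteq> Y" "y0 \<in> Y'"
    and "\<And>y y'. y \<in> Y' \<Longrightarrow> y' \<in> Y \<Longrightarrow> d y y' \<le> L \<Longrightarrow> y' \<in> Y'"
  shows "Y \<subseteq> Y'"
  using assms unfolding chain_connected_def by blast

lemma chain_connected_mono: "chain_connected d L Y \<Longrightarrow> L \<le> L' \<Longrightarrow> chain_connected d L' Y"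
  unfolding chain_connected_def by (meson order_trans)

lemma iter_nbhd_subset:
  assumes "\<forall>Z'\<in>Zs. Z' \<subseteq> S" "Z \<subseteq> S"
  shows "iter_nbhd S d Zs k s Z \<subseteq> S"
  using assms by (induction k) auto

lemma iter_nbhd_subset_Suc:
  assumes ne: "\<forall>Z'\<in>Zs. Z' \<noteq> {}" and sub: "\<forall>Z'\<in>Zs. Z' \<subseteq> S" and Z: "Z \<in> Zs"
    and refl: "\<forall>x\<in>S. d x x = 0" and s: "0 \<le> s"
  shows "iter_nbhd S d Zs k s Z \<subseteq> iter_nbhd S d Zs (Suc k) s Z"
proof
  fix y assume y: "y \<in> iter_nbhd S d Zs k s Z"
  have "iter_nbhd S d Zs k s Z \<subseteq> S" using iter_nbhd_subset sub Z by blast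
  then have "y \<in> closed_nbhd S d s (iter_nbhd S d Zs k s Z)"
    using y refl s unfolding closed_nbhd_def by force
  moreover obtain Z' where "Z' \<in> Zs" "y \<in> Z'" "Z' \<subseteq> iter_nbhd S d Zs k s Z"
    using y Z by (cases k) auto
  ultimately show "y \<in> iter_nbhd S d Zs (Suc k) s Z" by auto
qed

lemma subset_iter_nbhd:
  assumes "\<forall>Z'\<in>Zs. Z' \<noteq> {}" "\<forall>Z'\<in>Zs. Z' \<subseteq> S" "Z \<in> Zs" "\<forall>x\<in>S. d x x = 0" "0 \<le> s"
  shows "Z \<subseteq> iter_nbhd S d Zs k s Z"
proof (induction k)
  case (Suc k)
  then show ?case using iter_nbhd_subset_Suc[of Zs S Z d s k] assms by blast
qed simp

text \<open>A subset closed under \<open>L\<close>-steps contains every piece it meets, hence the core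
  \<open>N\<close>, hence every piece.\<close>

lemma chain_connected_Union_attached:
  assumes N: "chain_connected d L N" "N \<subseteq> \<Union>Ps"
    and pieces: "\<forall>Z\<in>Ps. chain_connected d L Z"
    and attached: "\<forall>Z\<in>Ps. \<exists>z\<in>Z. \<exists>w\<in>N. d w z \<le> L \<and> d z w \<le> L"
  shows "chain_connected d L (\<Union>Ps)"
  unfolding chain_connected_def
proof (intro allI impI)
  fix Y' assume Y'_sub: "Y' \<subseteq> \<Union>Ps" and "Y' \<noteq> {}"
    and closed: "\<forall>y\<in>Y'. \<forall>y'\<in>\<Union>Ps. d y y' \<le> L \<longrightarrow> y' \<in> Y'"
  have piece: "Z \<subseteq> Y'" if Z: "Z \<in> Ps" and z: "z \<in> Z" "z \<in> Y'" for Z z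
  proof -
    have "Z \<subseteq> Z \<inter> Y'"
    proof (rule chain_connectedD)
      show "chain_connected d L Z" using pieces Z by blast
      show "\<And>y y'. y \<in> Z \<inter> Y' \<Longrightarrow> y' \<in> Z \<Longrightarrow> d y y' \<le> L \<Longrightarrow> y' \<in> Z \<inter> Y'"
        using closed Z by blast
    qed (use z in auto)
    then show ?thesis by blast
  qed
  obtain y Z where y: "y \<in> Y'" "y \<in> Z" and Z: "Z \<in> Ps" using \<open>Y' \<noteq> {}\<close> Y'_sub by blast
  obtain z w where zw: "z \<in> Z" "w \<in> N" "d z w \<le> L" using attached Z by blast
  have "z \<in> Y'" using piece[OF Z y(2,1)] zw(1) by blast
  then have "w \<in> Y'" using closed zw N(2) by blast
  have "N \<subseteq> Y' \<inter> N"
  proof (rule chain_connectedD[OF N(1)])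
    show "w \<in> Y' \<inter> N" using \<open>w \<in> Y'\<close> zw(2) by blast
    show "\<And>y y'. y \<in> Y' \<inter> N \<Longrightarrow> y' \<in> N \<Longrightarrow> d y y' \<le> L \<Longrightarrow> y' \<in> Y' \<inter> N"
      using closed N(2) by blast
  qed blast
  then have N_Y': "N \<subseteq> Y'" by blast
  have "Z' \<subseteq> Y'" if Z': "Z' \<in> Ps" for Z'
  proof -
    obtain z w where "z \<in> Z'" "w \<in> N" "d w z \<le> L" using attached Z' by blast
    then have "z \<in> Y'" using closed N_Y' Z' by blast
    then show ?thesis using piece[OF Z' \<open>z \<in> Z'\<close>] by blast
  qed
  then show "Y' = \<Union>Ps" using Y'_sub by blast
qed

lemma chain_connected_iter_nbhd:
  assumes ne: "\<forall>Z'\<in>Zs. Z' \<noteq> {}" and sub: "\<forall>Z'\<in>Zs. Z' \<subseteq> S" and Z: "Z \<in> Zs"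
    and refl: "\<forall>x\<in>S. d x x = 0" and sym: "\<forall>x\<in>S. \<forall>y\<in>S. d x y = d y x"
    and s: "0 \<le> s" "s \<le> L" and conn: "\<forall>Z'\<in>Zs. chain_connected d L Z'"
  shows "chain_connected d L (iter_nbhd S d Zs k s Z)"
proof (induction k)
  case 0
  then show ?case using conn Z by simp
next
  case (Suc k)
  let ?N = "iter_nbhd S d Zs k s Z"
  let ?Ps = "{Z' \<in> Zs. Z' \<inter> closed_nbhd S d s ?N \<noteq> {}}"
  have N_S: "?N \<subseteq> S" using iter_nbhd_subset sub Z by blast
  have "chain_connected d L (\<Union>?Ps)"
  proof (rule chain_connected_Union_attached[OF Suc.IH])
    show "?N \<subseteq> \<Union>?Ps"
      using iter_nbhd_subset_Suc[of Zs S Z d s k, OF ne sub Z refl s(1)] by simp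
    show "\<forall>Z'\<in>?Ps. chain_connected d L Z'" using conn by blast
    show "\<forall>Z'\<in>?Ps. \<exists>z\<in>Z'. \<exists>w\<in>?N. d w z \<le> L \<and> d z w \<le> L"
    proof
      fix Z' assume "Z' \<in> ?Ps"
      then obtain z w where "z \<in> Z'" "z \<in> S" "w \<in> ?N" "d z w \<le> s"
        unfolding closed_nbhd_def by blast
      moreover have "d w z = d z w" using sym N_S \<open>z \<in> S\<close> \<open>w \<in> ?N\<close> by blast
      ultimately show "\<exists>z\<in>Z'. \<exists>w\<in>?N. d w z \<le> L \<and> d z w \<le> L" using s(2) by force
    qed
  qed
  then show ?case by simp
qed

definition chain_step :: "('a \<Rightarrow> 'a \<Rightarrow> real) \<Rightarrow> real \<Rightarrow> 'a set \<Rightarrow> 'a rel" where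
  "chain_step d r A = {(a, b). a \<in> A \<and> b \<in> A \<and> d a b < r}"

definition chain_component :: "('a \<Rightarrow> 'a \<Rightarrow> real) \<Rightarrow> real \<Rightarrow> 'a set \<Rightarrow> 'a \<Rightarrow> 'a set" where
  "chain_component d r A x = (chain_step d r A)\<^sup>* `` {x}"

lemma chain_component_self: "x \<in> chain_component d r A x"
  unfolding chain_component_def by simp

lemma chain_component_subset:
  assumes "x \<in> A"
  shows "chain_component d r A x \<subseteq> A"
proof
  fix y assume "y \<in> chain_component d r A x"
  then have "(x, y) \<in> (chain_step d r A)\<^sup>*" unfolding chain_component_def by simp
  then show "y \<in> A" using assms by (induction rule: rtrancl_induct) (auto simp: chain_step_def)
qed

lemma Union_chain_components: "\<Union>(chain_component d r A ` A) = A"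
  using chain_component_subset chain_component_self by fast

lemma chain_component_eq:
  assumes sym: "\<forall>a\<in>A. \<forall>b\<in>A. d a b = d b a" and y: "y \<in> chain_component d r A x"
  shows "chain_component d r A y = chain_component d r A x"
proof -
  have "sym (chain_step d r A)" using sym unfolding chain_step_def sym_def by auto
  then have "(y, x) \<in> (chain_step d r A)\<^sup>*"
    using y sym_rtrancl unfolding chain_component_def sym_def by blast
  then show ?thesis using y unfolding chain_component_def by (auto intro: rtrancl_trans)
qed

lemma chain_connected_chain_component:
  assumes sym: "\<forall>a\<in>A. \<forall>b\<in>A. d a b = d b a"
  shows "chain_connected d r (chain_component d r A x)"
  unfolding chain_connected_def
proof (intro allI impI)
  fix Y' assume Y': "Y' \<subseteq> chain_component d r A x" "Y' \<noteq> {}"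
    and closed: "\<forall>y\<in>Y'. \<forall>y'\<in>chain_component d r A x. d y y' \<le> r \<longrightarrow> y' \<in> Y'"
  obtain y where y: "y \<in> Y'" using Y'(2) by blast
  have C_eq: "chain_component d r A y = chain_component d r A x"
    using chain_component_eq[OF sym] Y'(1) y by blast
  have "z \<in> Y'" if "(y, z) \<in> (chain_step d r A)\<^sup>*" for z
    using that
  proof (induction rule: rtrancl_induct)
    case (step a b)
    have "(y, b) \<in> (chain_step d r A)\<^sup>*" using step.hyps by (rule rtrancl_into_rtrancl)
    then have "b \<in> chain_component d r A x" using C_eq unfolding chain_component_def by blast
    moreover have "d a b \<le> r" using step.hyps(2) unfolding chain_step_def by simp
    ultimately show ?case using closed step.IH by blast
  qed (use y in simp)
  then show "Y' = chain_component d r A x"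
    using C_eq Y'(1) unfolding chain_component_def by blast
qed

lemma r_separated_chain_components:
  assumes sym: "\<forall>a\<in>A. \<forall>b\<in>A. d a b = d b a"
  shows "r_separated d r (chain_component d r A ` A)"
  unfolding r_separated_def
proof (intro ballI impI)
  fix C C' a b assume "C \<in> chain_component d r A ` A" "C' \<in> chain_component d r A ` A"
    and "C \<noteq> C'" and a: "a \<in> C" and b: "b \<in> C'"
  then obtain a0 b0 where "a0 \<in> A" "C = chain_component d r A a0"
    "b0 \<in> A" "C' = chain_component d r A b0" by blast
  then have ab: "a \<in> A" "b \<in> A" "C = chain_component d r A a" "C' = chain_component d r A b"
    using chain_component_subset[of a0 A d r] chain_component_subset[of b0 A d r]
      chain_component_eq[OF sym, of a r a0] chain_component_eq[OF sym, of b r b0] a b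
    by auto
  show "r \<le> d a b"
  proof (rule ccontr)
    assume "\<not> r \<le> d a b"
    then have "(a, b) \<in> chain_step d r A" using ab unfolding chain_step_def by simp
    then have "b \<in> C" using ab unfolding chain_component_def by simp
    then show False using chain_component_eq[OF sym] ab \<open>C \<noteq> C'\<close> by simp
  qed
qed

lemma image_chain_component_subset:
  assumes sep: "r_separated dX r V" and lip: "\<forall>a\<in>A. \<forall>b\<in>A. dX (f a) (f b) \<le> d a b"
    and A: "\<forall>a\<in>A. \<exists>B\<in>V. f a \<in> B" and B: "B \<in> V" "f x \<in> B"
  shows "f ` chain_component d r A x \<subseteq> B"
proof -
  have "f y \<in> B" if "(x, y) \<in> (chain_step d r A)\<^sup>*" for y
    using that
  proof (induction rule: rtrancl_induct)
    case (step a b)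
    then have ab: "a \<in> A" "b \<in> A" "d a b < r" unfolding chain_step_def by auto
    then obtain B' where "B' \<in> V" "f b \<in> B'" using A by blast
    moreover have "\<not> r \<le> dX (f a) (f b)" using lip ab by force
    ultimately show ?case using sep B(1) step.IH unfolding r_separated_def by blast
  qed (use B in simp)
  then show ?thesis unfolding chain_component_def by blast
qed

lemma is_metric_subset: "is_metric T d \<Longrightarrow> S \<subseteq> T \<Longrightarrow> is_metric S d"
  unfolding is_metric_def by blast

locale metric_group_extension =
  G: group G + Q: group Q + P: group P
  for G :: "('g, 'b) monoid_scheme" (structure)
    and Q :: "('q, 'c) monoid_scheme" and P :: "('p, 'a) monoid_scheme" +
  fixes \<iota> :: "'p \<Rightarrow> 'g" and \<phi> :: "'g \<Rightarrow> 'q" and d :: "'g \<Rightarrow> 'g \<Rightarrow> real"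
  assumes iota_hom: "\<iota> \<in> hom P G" and iota_inj: "inj_on \<iota> (carrier P)"
    and phi_hom: "\<phi> \<in> hom G Q"
    and exact: "\<iota> ` carrier P = kernel G Q \<phi>"
    and metric: "uniformly_discrete_proper_left_inv G d"
begin

sublocale phi: group_hom G Q \<phi>
  using phi_hom by (simp add: group_hom_def group_hom_axioms_def G.group_axioms Q.group_axioms)

sublocale iota: group_hom P G \<iota>
  using iota_hom by (simp add: group_hom_def group_hom_axioms_def G.group_axioms P.group_axioms)

lemma is_metric_carrier: "is_metric (carrier G) d"
  using metric unfolding uniformly_discrete_proper_left_inv_def by blast

lemma dist_nonneg: "x \<in> carrier G \<Longrightarrow> y \<in> carrier G \<Longrightarrow> 0 \<le> d x y"
  using is_metric_carrier unfolding is_metric_def by blast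

lemma dist_self: "x \<in> carrier G \<Longrightarrow> d x x = 0"
  using is_metric_carrier unfolding is_metric_def by blast

lemma dist_sym: "x \<in> carrier G \<Longrightarrow> y \<in> carrier G \<Longrightarrow> d x y = d y x"
  using is_metric_carrier unfolding is_metric_def by blast

lemma dist_ge_1: "x \<in> carrier G \<Longrightarrow> y \<in> carrier G \<Longrightarrow> x \<noteq> y \<Longrightarrow> 1 \<le> d x y"
  using metric unfolding uniformly_discrete_proper_left_inv_def by blast

lemma dist_left_mult:
  "g \<in> carrier G \<Longrightarrow> x \<in> carrier G \<Longrightarrow> y \<in> carrier G \<Longrightarrow> d (g \<otimes> x) (g \<otimes> y) = d x y"
  using metric unfolding uniformly_discrete_proper_left_inv_def by blast

lemma dist_triangle:
  "x \<in> carrier G \<Longrightarrow> y \<in> carrier G \<Longrightarrow> z \<in> carrier G \<Longrightarrow> d x z \<le> d x y + d y z"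
  using is_metric_carrier unfolding is_metric_def by blast

lemma finite_closed_ball: "x \<in> carrier G \<Longrightarrow> finite {y \<in> carrier G. d x y \<le> r}"
  using metric unfolding uniformly_discrete_proper_left_inv_def by blast

lemma dist_mult_right_self: "x \<in> carrier G \<Longrightarrow> c \<in> carrier G \<Longrightarrow> d x (x \<otimes> c) = d \<one> c"
  using dist_left_mult[of x \<one> c] by simp

lemma dist_one_inv_mult: "x \<in> carrier G \<Longrightarrow> y \<in> carrier G \<Longrightarrow> d \<one> (inv x \<otimes> y) = d x y"
  using dist_left_mult[of "inv x" x y] by simp

lemma dist_le_dist_mult_right:
  assumes "a \<in> carrier G" "a' \<in> carrier G" "c \<in> carrier G" "c' \<in> carrier G"
  shows "d a a' \<le> d (a \<otimes> c) (a' \<otimes> c') + d \<one> c + d \<one> c'"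
proof -
  have "d a a' \<le> d a (a \<otimes> c) + d (a \<otimes> c) (a' \<otimes> c') + d (a' \<otimes> c') a'"
    using assms dist_triangle[of a "a \<otimes> c" a'] dist_triangle[of "a \<otimes> c" "a' \<otimes> c'" a'] by simp
  then show ?thesis
    using assms dist_mult_right_self dist_sym[of "a' \<otimes> c'" a'] by simp
qed

definition ball_one :: "real \<Rightarrow> 'g set" where
  "ball_one E = {c \<in> carrier G. d \<one> c \<le> E}"

lemma finite_ball_one: "finite (ball_one E)"
  unfolding ball_one_def using finite_closed_ball by simp

lemma card_closed_ball:
  assumes x: "x \<in> carrier G"
  shows "card {y \<in> carrier G. d x y \<le> r} = card (ball_one r)"
proof -
  have "{y \<in> carrier G. d x y \<le> r} = (\<lambda>c. x \<otimes> c) ` ball_one r"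
  proof (intro equalityI subsetI)
    fix y assume "y \<in> {y \<in> carrier G. d x y \<le> r}"
    then show "y \<in> (\<lambda>c. x \<otimes> c) ` ball_one r"
      using x dist_one_inv_mult[of x y] unfolding ball_one_def
      by (intro image_eqI[of _ _ "inv x \<otimes> y"]) (auto simp: G.m_assoc[symmetric])
  qed (use x dist_mult_right_self in \<open>auto simp: ball_one_def\<close>)
  moreover have "inj_on (\<lambda>c. x \<otimes> c) (ball_one r)"
    using x unfolding ball_one_def by (auto intro: inj_onI)
  ultimately show ?thesis by (simp add: card_image)
qed

lemma metric_family_of_subsets:
  assumes "\<forall>(S, dS)\<in>F. S \<subseteq> carrier G \<and> dS = d"
  shows "metric_family F"
  unfolding metric_family_def
proof (intro conjI allI)
  show "\<forall>(S, dS)\<in>F. is_metric S dS \<and> (\<forall>x\<in>S. \<forall>y\<in>S. x \<noteq> y \<longrightarrow> 1 \<le> dS x y)"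
  proof clarify
    fix S dS assume "(S, dS) \<in> F"
    then have S: "S \<subseteq> carrier G" and "dS = d" using assms by auto
    moreover have "is_metric S d" using is_metric_subset[OF is_metric_carrier S] .
    moreover have "\<forall>x\<in>S. \<forall>y\<in>S. x \<noteq> y \<longrightarrow> 1 \<le> d x y" using S dist_ge_1 by blast
    ultimately show "is_metric S dS \<and> (\<forall>x\<in>S. \<forall>y\<in>S. x \<noteq> y \<longrightarrow> 1 \<le> dS x y)" by simp
  qed
  fix r :: real
  show "\<exists>N. \<forall>(S, dS)\<in>F. \<forall>x\<in>S. finite {y \<in> S. dS x y \<le> r} \<and> card {y \<in> S. dS x y \<le> r} \<le> N"
  proof (intro exI[of _ "card (ball_one r)"], clarify)
    fix S dS x assume "(S, dS) \<in> F" "x \<in> S"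
    then have S: "S \<subseteq> carrier G" "dS = d" "x \<in> carrier G" using assms by auto
    have sub: "{y \<in> S. d x y \<le> r} \<subseteq> {y \<in> carrier G. d x y \<le> r}" using S by blast
    show "finite {y \<in> S. dS x y \<le> r} \<and> card {y \<in> S. dS x y \<le> r} \<le> card (ball_one r)"
      using finite_subset[OF sub finite_closed_ball] card_mono[OF finite_closed_ball sub]
        card_closed_ball S by simp
  qed
qed

lemma quotient_metric_le_dist:
  assumes "a \<in> carrier G" "b \<in> carrier G"
  shows "quotient_metric G d \<phi> (\<phi> a) (\<phi> b) \<le> d a b"
  unfolding quotient_metric_def
proof (rule cInf_lower)
  show "bdd_below {d g g' |g g'. g \<in> carrier G \<and> g' \<in> carrier G \<and> \<phi> g = \<phi> a \<and> \<phi> g' = \<phi> b}"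
    using dist_nonneg by (auto intro: bdd_belowI[of _ 0])
qed (use assms in blast)

definition fibres_close :: "real \<Rightarrow> 'g \<Rightarrow> 'g \<Rightarrow> bool" where
  "fibres_close E y y' \<longleftrightarrow>
     (\<exists>g\<in>carrier G. \<exists>g'\<in>carrier G. \<phi> g = \<phi> y \<and> \<phi> g' = \<phi> y' \<and> d g g' \<le> E)"

lemma fibres_close_if_dist_le:
  "y \<in> carrier G \<Longrightarrow> y' \<in> carrier G \<Longrightarrow> d y y' \<le> E \<Longrightarrow> fibres_close E y y'"
  unfolding fibres_close_def by blast

lemma fibres_close_trans:
  assumes "fibres_close E y y'" "fibres_close E' y' y''"
  shows "fibres_close (E + E') y y''"
proof -
  obtain g1 g2 where g12: "g1 \<in> carrier G" "g2 \<in> carrier G" "\<phi> g1 = \<phi> y" "\<phi> g2 = \<phi> y'"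
    "d g1 g2 \<le> E"
    using assms(1) unfolding fibres_close_def by blast
  obtain g3 g4 where g34: "g3 \<in> carrier G" "g4 \<in> carrier G" "\<phi> g3 = \<phi> y'" "\<phi> g4 = \<phi> y''"
    "d g3 g4 \<le> E'"
    using assms(2) unfolding fibres_close_def by blast
  \<comment> \<open>translate the pair \<open>g3, g4\<close> so that it starts at \<open>g2\<close>\<close>
  define h where "h = g2 \<otimes> inv g3 \<otimes> g4"
  have h: "h \<in> carrier G" using g12 g34 h_def by simp
  have "d g2 h = d g3 g4"
    using dist_left_mult[of "g2 \<otimes> inv g3" g3 g4] g12 g34 unfolding h_def by (simp add: G.m_assoc)
  moreover have "\<phi> h = \<phi> g4"
  proof -
    have "\<phi> g2 = \<phi> g3" using g12(4) g34(3) by simp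
    then show ?thesis using g12(2) g34(1,2) unfolding h_def by simp
  qed
  ultimately show ?thesis
    unfolding fibres_close_def using g12 g34 h dist_triangle[of g1 g2 h] by force
qed

lemma fibres_close_if_quotient_metric_less:
  assumes "a \<in> carrier G" "b \<in> carrier G" "quotient_metric G d \<phi> (\<phi> a) (\<phi> b) < E"
  shows "fibres_close E a b"
proof -
  let ?D = "{d g g' |g g'. g \<in> carrier G \<and> g' \<in> carrier G \<and> \<phi> g = \<phi> a \<and> \<phi> g' = \<phi> b}"
  have "?D \<noteq> {}" using assms(1,2) by blast
  moreover have "Inf ?D < E" using assms(3) unfolding quotient_metric_def .
  ultimately have "\<exists>v\<in>?D. v < E" by (rule cInf_lessD)
  then obtain g g' where "g \<in> carrier G" "g' \<in> carrier G" "\<phi> g = \<phi> a" "\<phi> g' = \<phi> b"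
    "d g g' < E"
    by blast
  then show ?thesis unfolding fibres_close_def by (meson less_imp_le)
qed

definition coset_nbhd :: "'g \<Rightarrow> 'p set \<Rightarrow> real \<Rightarrow> 'g set" where
  "coset_nbhd x H E = {x \<otimes> \<iota> k \<otimes> c |k c. k \<in> H \<and> c \<in> ball_one E}"

lemma mem_coset_nbhd_if_fibres_close:
  assumes x: "x \<in> carrier G" and y: "y \<in> carrier G" and "fibres_close E x y"
  shows "y \<in> coset_nbhd x (carrier P) E"
proof -
  obtain g g' where g: "g \<in> carrier G" "g' \<in> carrier G" "\<phi> g = \<phi> x" "\<phi> g' = \<phi> y" "d g g' \<le> E"
    using assms(3) unfolding fibres_close_def by blast
  define c where "c = inv g \<otimes> g'"
  have c: "c \<in> ball_one E" using g dist_one_inv_mult[of g g'] unfolding c_def ball_one_def by simp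
  define t where "t = inv x \<otimes> y \<otimes> inv c"
  have "\<phi> (inv x \<otimes> y) = \<phi> c" using x y g unfolding c_def by simp
  then have "t \<in> kernel G Q \<phi>"
    using x y g unfolding t_def c_def kernel_def by simp
  then obtain p where p: "p \<in> carrier P" "\<iota> p = t" using exact by (metis imageE)
  have "x \<otimes> t \<otimes> c = x \<otimes> (inv x \<otimes> y)"
    using x y g unfolding t_def c_def by (simp add: G.m_assoc)
  then have "y = x \<otimes> t \<otimes> c" using x y by (simp add: G.m_assoc[symmetric])
  then show ?thesis using p c unfolding coset_nbhd_def by blast
qed

lemma dist_iota_le_dist_coset_nbhd:
  assumes x: "x \<in> carrier G" and k: "k \<in> carrier P" "k' \<in> carrier P"
    and c: "c \<in> ball_one E" "c' \<in> ball_one E"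
  shows "d (\<iota> k) (\<iota> k') \<le> d (x \<otimes> \<iota> k \<otimes> c) (x \<otimes> \<iota> k' \<otimes> c') + 2 * E"
proof -
  have "d (\<iota> k) (\<iota> k') = d (x \<otimes> \<iota> k) (x \<otimes> \<iota> k')" using x k by (simp add: dist_left_mult)
  also have "\<dots> \<le> d (x \<otimes> \<iota> k \<otimes> c) (x \<otimes> \<iota> k' \<otimes> c') + d \<one> c + d \<one> c'"
    using dist_le_dist_mult_right x k c unfolding ball_one_def by simp
  also have "\<dots> \<le> d (x \<otimes> \<iota> k \<otimes> c) (x \<otimes> \<iota> k' \<otimes> c') + 2 * E"
    using c unfolding ball_one_def by simp
  finally show ?thesis .
qed

definition kernel_ball :: "real \<Rightarrow> 'p set" where
  "kernel_ball R = {p \<in> carrier P. d \<one> (\<iota> p) \<le> R}"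

lemma finite_kernel_ball: "finite (kernel_ball R)"
proof (rule finite_imageD)
  show "finite (\<iota> ` kernel_ball R)"
    by (rule finite_subset[OF _ finite_closed_ball[OF G.one_closed, of R]])
      (auto simp: kernel_ball_def)
  show "inj_on \<iota> (kernel_ball R)"
    using iota_inj by (rule inj_on_subset) (auto simp: kernel_ball_def)
qed

lemma subgroup_generate_kernel_ball: "subgroup (generate P (kernel_ball R)) P"
  by (rule P.generate_is_subgroup) (auto simp: kernel_ball_def)

text \<open>If \<open>x \<iota>(k) c\<close> and \<open>x \<iota>(p) c'\<close> with \<open>c, c' \<in> ball_one E\<close> are at distance at most \<open>L\<close>, then \<open>k\<^sup>-\<^sup>1 p\<close> lies
  in the kernel ball of radius \<open>L + 2E\<close>; so along an \<open>L\<close>-chain the \<open>P\<close>-coordinate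
  never leaves the subgroup generated by that finite ball.\<close>

lemma chain_connected_subset_coset_nbhd:
  assumes Y: "Y \<subseteq> carrier G" "chain_connected d L Y" "x \<in> Y"
    and close: "\<forall>y\<in>Y. fibres_close E x y" and E: "0 \<le> E"
  shows "Y \<subseteq> coset_nbhd x (generate P (kernel_ball (L + 2 * E))) E"
proof -
  let ?H = "generate P (kernel_ball (L + 2 * E))"
  have H: "subgroup ?H P" by (rule subgroup_generate_kernel_ball)
  have x: "x \<in> carrier G" using Y by blast
  have "Y \<subseteq> Y \<inter> coset_nbhd x ?H E"
  proof (rule chain_connectedD[OF Y(2)])
    have "x = x \<otimes> \<iota> \<one>\<^bsub>P\<^esub> \<otimes> \<one>" using x by simp
    moreover have "\<one> \<in> ball_one E" using E dist_self unfolding ball_one_def by simp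
    ultimately show "x \<in> Y \<inter> coset_nbhd x ?H E"
      using Y(3) subgroup.one_closed[OF H] unfolding coset_nbhd_def by blast
  next
    show "Y \<inter> coset_nbhd x ?H E \<subseteq> Y" by blast
  next
    fix y y' assume y: "y \<in> Y \<inter> coset_nbhd x ?H E" and y': "y' \<in> Y" and "d y y' \<le> L"
    obtain k c where k: "k \<in> ?H" and c: "c \<in> ball_one E" and y_eq: "y = x \<otimes> \<iota> k \<otimes> c"
      using y unfolding coset_nbhd_def by blast
    have y'_G: "y' \<in> carrier G" using y' Y(1) by blast
    obtain p c' where p: "p \<in> carrier P" and c': "c' \<in> ball_one E" and y'_eq: "y' = x \<otimes> \<iota> p \<otimes> c'"
      using mem_coset_nbhd_if_fibres_close[OF x y'_G] close y' unfolding coset_nbhd_def by blast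
    have kP: "k \<in> carrier P" using k subgroup.subset[OF H] by blast
    define q where "q = inv\<^bsub>P\<^esub> k \<otimes>\<^bsub>P\<^esub> p"
    have "d \<one> (\<iota> q) = d (\<iota> k) (\<iota> p)"
      using kP p dist_one_inv_mult[of "\<iota> k" "\<iota> p"] unfolding q_def by simp
    also have "\<dots> \<le> d y y' + 2 * E"
      using dist_iota_le_dist_coset_nbhd[OF x kP p c c'] y_eq y'_eq by simp
    also have "\<dots> \<le> L + 2 * E" using \<open>d y y' \<le> L\<close> by simp
    finally have "q \<in> ?H"
      using kP p unfolding q_def by (intro generate.incl) (simp add: kernel_ball_def)
    then have "k \<otimes>\<^bsub>P\<^esub> q \<in> ?H" using subgroup.m_closed[OF H k] by blast
    moreover have "k \<otimes>\<^bsub>P\<^esub> q = p" using kP p unfolding q_def by (simp add: P.m_assoc[symmetric])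
    ultimately show "y' \<in> Y \<inter> coset_nbhd x ?H E"
      using y' c' y'_eq unfolding coset_nbhd_def by blast
  qed
  then show ?thesis by blast
qed

lemma fibres_close_iter_nbhd:
  assumes sub: "\<forall>Z'\<in>Zs. Z' \<subseteq> carrier G"
    and close: "\<forall>Z'\<in>Zs. \<forall>a\<in>Z'. \<forall>b\<in>Z'. fibres_close E0 a b"
    and Z: "Z \<in> Zs" and x: "x \<in> Z"
  shows "\<forall>y\<in>iter_nbhd (carrier G) d Zs k s Z. fibres_close (E0 + real k * (s + E0)) x y"
proof (induction k)
  case 0
  then show ?case using close Z x by simp
next
  case (Suc k)
  let ?N = "iter_nbhd (carrier G) d Zs k s Z"
  show ?case
  proof
    fix y assume "y \<in> iter_nbhd (carrier G) d Zs (Suc k) s Z"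
    then obtain Z' where Z': "Z' \<in> Zs" "y \<in> Z'" "Z' \<inter> closed_nbhd (carrier G) d s ?N \<noteq> {}"
      by auto
    then obtain z w where zw: "z \<in> Z'" "z \<in> carrier G" "w \<in> ?N" "d z w \<le> s"
      unfolding closed_nbhd_def by blast
    have w: "w \<in> carrier G" using zw(3) iter_nbhd_subset sub Z by blast
    have "fibres_close (E0 + real k * (s + E0)) x w" using Suc.IH zw(3) by blast
    moreover have "fibres_close s w z"
      using fibres_close_if_dist_le[OF w zw(2)] dist_sym[OF w zw(2)] zw(4) by simp
    moreover have "fibres_close E0 z y" using close Z' zw(1) by blast
    ultimately have "fibres_close (E0 + real k * (s + E0) + s + E0) x y"
      by (blast intro: fibres_close_trans)
    moreover have "E0 + real k * (s + E0) + s + E0 = E0 + real (Suc k) * (s + E0)"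
      by (simp add: algebra_simps)
    ultimately show "fibres_close (E0 + real (Suc k) * (s + E0)) x y" by simp
  qed
qed

lemma regular_projection_coset_nbhd:
  assumes H: "H \<subseteq> carrier P" and E: "0 \<le> E" and x: "x \<in> carrier G"
    and S: "S \<subseteq> coset_nbhd x H E"
  shows "\<exists>f. f ` S \<subseteq> \<iota> ` H \<and> (\<forall>y\<in>S. \<forall>y'\<in>S. d (f y) (f y') \<le> (2 * E + 1) * d y y') \<and>
    (\<forall>t\<in>\<iota> ` H. finite {y \<in> S. f y = t} \<and> card {y \<in> S. f y = t} \<le> card (ball_one E))"
proof -
  have "\<forall>y\<in>S. \<exists>kc. fst kc \<in> H \<and> snd kc \<in> ball_one E \<and> y = x \<otimes> \<iota> (fst kc) \<otimes> snd kc"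
    using S unfolding coset_nbhd_def by fastforce
  from bchoice[OF this] obtain kc where kc_all: "\<forall>y\<in>S.
      fst (kc y) \<in> H \<and> snd (kc y) \<in> ball_one E \<and> y = x \<otimes> \<iota> (fst (kc y)) \<otimes> snd (kc y)"
    by blast
  then have k: "fst (kc y) \<in> carrier P" and c: "snd (kc y) \<in> ball_one E"
    and y_eq: "y = x \<otimes> \<iota> (fst (kc y)) \<otimes> snd (kc y)" if "y \<in> S" for y
    using that H by blast+
  have y_G: "y \<in> carrier G" if "y \<in> S" for y
  proof -
    have "x \<otimes> \<iota> (fst (kc y)) \<otimes> snd (kc y) \<in> carrier G"
      using x k[OF that] c[OF that] unfolding ball_one_def by simp
    then show ?thesis using y_eq[OF that] by metis
  qed
  define f where "f y = \<iota> (fst (kc y))" for y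
  have "f ` S \<subseteq> \<iota> ` H" using kc_all unfolding f_def by blast
  moreover have "d (f y) (f y') \<le> (2 * E + 1) * d y y'" if y: "y \<in> S" and y': "y' \<in> S" for y y'
  proof (cases "y = y'")
    case True
    then show ?thesis using dist_self k[OF y] y_G[OF y] unfolding f_def by simp
  next
    case False
    have "d (f y) (f y') \<le> d y y' + 2 * E"
      using dist_iota_le_dist_coset_nbhd[OF x k[OF y] k[OF y'] c[OF y] c[OF y']]
        y_eq[OF y, symmetric] y_eq[OF y', symmetric] unfolding f_def by simp
    also have "\<dots> \<le> (2 * E + 1) * d y y'"
      using mult_left_mono[OF dist_ge_1[OF y_G[OF y] y_G[OF y'] False], of "2 * E"] E
      by (simp add: algebra_simps)
    finally show ?thesis .
  qed
  moreover have "finite {y \<in> S. f y = t} \<and> card {y \<in> S. f y = t} \<le> card (ball_one E)" for t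
  proof -
    have inj: "inj_on (snd \<circ> kc) {y \<in> S. f y = t}"
    proof (rule inj_onI)
      fix y y' assume "y \<in> {y \<in> S. f y = t}" "y' \<in> {y \<in> S. f y = t}"
        and "(snd \<circ> kc) y = (snd \<circ> kc) y'"
      then show "y = y'" using y_eq[of y] y_eq[of y'] unfolding f_def by auto
    qed
    have img: "(snd \<circ> kc) ` {y \<in> S. f y = t} \<subseteq> ball_one E" using c by auto
    show ?thesis
      using inj_on_finite[OF inj img finite_ball_one] card_inj_on_le[OF inj img finite_ball_one]
      by simp
  qed
  ultimately show ?thesis by blast
qed

lemma regular_maps_to_subgroup_image:
  assumes H: "H \<subseteq> carrier P" and E: "0 \<le> E"
    and F: "\<forall>(S, dS)\<in>F. dS = d \<and> (\<exists>x\<in>carrier G. S \<subseteq> coset_nbhd x H E)"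
  shows "regular_maps_to F {(\<iota> ` H, d)}"
  unfolding regular_maps_to_def
proof (intro exI[of _ "2 * E + 1"] exI[of _ "card (ball_one E)"], clarify)
  fix S dS assume "(S, dS) \<in> F"
  then obtain x where "x \<in> carrier G" "S \<subseteq> coset_nbhd x H E" and "dS = d"
    using F by blast
  then show "\<exists>(T, dT)\<in>{(\<iota> ` H, d)}. \<exists>f. f ` S \<subseteq> T \<and>
      (\<forall>y\<in>S. \<forall>y'\<in>S. dT (f y) (f y') \<le> (2 * E + 1) * dS y y') \<and>
      (\<forall>t\<in>T. finite {y \<in> S. f y = t} \<and> card {y \<in> S. f y = t} \<le> card (ball_one E))"
    using regular_projection_coset_nbhd[OF H E] by simp
qed

lemma nbhd_family_in_class:
  fixes \<M> :: "'g mspace set \<Rightarrow> bool"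
  assumes stable: "stable_under_regular_maps \<M>"
    and fg_in_M: "\<And>H. subgroup H P \<Longrightarrow> finitely_generated_subgroup P H \<Longrightarrow> space_in \<M> (\<iota> ` H) d"
    and ne: "\<forall>Z\<in>Zs. Z \<noteq> {}" and sub: "\<forall>Z\<in>Zs. Z \<subseteq> carrier G"
    and conn: "\<forall>Z\<in>Zs. chain_connected d L Z"
    and close: "\<forall>Z\<in>Zs. \<forall>a\<in>Z. \<forall>b\<in>Z. fibres_close E0 a b"
    and E0: "0 \<le> E0" and s: "0 \<le> s" "s \<le> L"
  shows "\<M> (nbhd_family (carrier G) d Zs m s)"
proof -
  define E where "E = E0 + real m * (s + E0)"
  define H where "H = generate P (kernel_ball (L + 2 * E))"
  have E: "0 \<le> E" unfolding E_def using E0 s by simp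
  have H: "subgroup H P" unfolding H_def by (rule subgroup_generate_kernel_ball)
  have "finitely_generated_subgroup P H"
    unfolding finitely_generated_subgroup_def H_def using finite_kernel_ball
    by (auto simp: kernel_ball_def)
  then have M_H: "\<M> {(\<iota> ` H, d)}" using fg_in_M[OF H] unfolding space_in_def by blast
  have refl: "\<forall>x\<in>carrier G. d x x = 0" using dist_self by blast
  have sym: "\<forall>x\<in>carrier G. \<forall>y\<in>carrier G. d x y = d y x" using dist_sym by blast
  have nbhd_G: "iter_nbhd (carrier G) d Zs m s Z \<subseteq> carrier G" if "Z \<in> Zs" for Z
    using iter_nbhd_subset sub that by blast
  have "\<exists>x\<in>carrier G. iter_nbhd (carrier G) d Zs m s Z \<subseteq> coset_nbhd x H E" if Z: "Z \<in> Zs" for Z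
  proof -
    obtain x where x: "x \<in> Z" using ne Z by blast
    have "iter_nbhd (carrier G) d Zs m s Z \<subseteq> coset_nbhd x H E"
      unfolding H_def
    proof (rule chain_connected_subset_coset_nbhd[OF nbhd_G[OF Z]])
      show "chain_connected d L (iter_nbhd (carrier G) d Zs m s Z)"
        by (rule chain_connected_iter_nbhd[of Zs "carrier G" Z d s L m, OF ne sub Z refl sym s conn])
      show "x \<in> iter_nbhd (carrier G) d Zs m s Z"
        using subset_iter_nbhd[of Zs "carrier G" Z d s m, OF ne sub Z refl s(1)] x by blast
      show "\<forall>y\<in>iter_nbhd (carrier G) d Zs m s Z. fibres_close E x y"
        using fibres_close_iter_nbhd[OF sub close Z x] unfolding E_def .
    qed (rule E)
    then show ?thesis using x sub Z by blast
  qed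
  then have "regular_maps_to (nbhd_family (carrier G) d Zs m s) {(\<iota> ` H, d)}"
    by (intro regular_maps_to_subgroup_image[OF subgroup.subset[OF H] E])
      (auto simp: nbhd_family_def)
  moreover have "metric_family (nbhd_family (carrier G) d Zs m s)"
    by (rule metric_family_of_subsets) (auto simp: nbhd_family_def dest: nbhd_G)
  ultimately show ?thesis using stable M_H unfolding stable_under_regular_maps_def by blast
qed

text \<open>The strict inequality \<open>D < E\<close> is needed because the infimum defining the quotient
  metric need not be attained.\<close>

lemma fibres_close_in_chain_component:
  assumes sep: "r_separated (quotient_metric G d \<phi>) r V"
    and bdd: "\<forall>B\<in>V. \<forall>q\<in>B. \<forall>q'\<in>B. quotient_metric G d \<phi> q q' \<le> D" and "D < E"
    and x: "x \<in> A" and A: "A = {y \<in> carrier G. \<phi> y \<in> \<Union>V}"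
    and ab: "a \<in> chain_component d r A x" "b \<in> chain_component d r A x"
  shows "fibres_close E a b"
proof -
  obtain B where B: "B \<in> V" "\<phi> x \<in> B" using x A by blast
  have "\<phi> ` chain_component d r A x \<subseteq> B"
  proof (rule image_chain_component_subset)
    show "\<forall>a\<in>A. \<forall>b\<in>A. quotient_metric G d \<phi> (\<phi> a) (\<phi> b) \<le> d a b"
      using quotient_metric_le_dist A by blast
    show "\<forall>a\<in>A. \<exists>B\<in>V. \<phi> a \<in> B" using A by blast
  qed (use sep B in auto)
  then have "\<phi> a \<in> B" "\<phi> b \<in> B" using ab by blast+
  then have "quotient_metric G d \<phi> (\<phi> a) (\<phi> b) < E" using bdd B(1) \<open>D < E\<close> by force
  moreover have "a \<in> carrier G" "b \<in> carrier G"
    using chain_component_subset[OF x] A ab by blast+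
  ultimately show ?thesis using fibres_close_if_quotient_metric_less by blast
qed

lemma asdim_M_le_if_asdim_le:
  fixes \<M> :: "'g mspace set \<Rightarrow> bool"
  assumes stable: "stable_under_regular_maps \<M>"
    and fg_in_M: "\<And>H. subgroup H P \<Longrightarrow> finitely_generated_subgroup P H \<Longrightarrow> space_in \<M> (\<iota> ` H) d"
    and asdim_Q: "asdim_le (carrier Q) (quotient_metric G d \<phi>) n"
  shows "asdim_M_le \<M> (carrier G) d n"
  unfolding asdim_M_le_def
proof (intro allI impI)
  fix r :: real assume "0 < r"
  then obtain V D where V_cover: "carrier Q = (\<Union>i\<le>n. \<Union>(V i))"
    and V_sep: "\<forall>i\<le>n. r_separated (quotient_metric G d \<phi>) r (V i)"
    and V_bdd: "\<forall>i\<le>n. \<forall>B\<in>V i. \<forall>q\<in>B. \<forall>q'\<in>B. quotient_metric G d \<phi> q q' \<le> D"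
    using asdim_Q unfolding asdim_le_def by meson
  define A where "A i = {x \<in> carrier G. \<phi> x \<in> \<Union>(V i)}" for i
  define U where "U i = chain_component d r (A i) ` A i" for i
  have A_G: "A i \<subseteq> carrier G" for i unfolding A_def by blast
  have sym: "\<forall>a\<in>A i. \<forall>b\<in>A i. d a b = d b a" for i using dist_sym A_G by blast
  have "\<phi> x \<in> (\<Union>i\<le>n. \<Union>(V i))" if "x \<in> carrier G" for x
    using phi.hom_closed[OF that] V_cover by simp
  then have "carrier G = (\<Union>i\<le>n. A i)" unfolding A_def by auto
  then have cover: "carrier G = (\<Union>i\<le>n. \<Union>(U i))"
    unfolding U_def Union_chain_components .
  have sep: "\<forall>i\<le>n. r_separated d r (U i)"
    unfolding U_def using r_separated_chain_components[OF sym] by blast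
  let ?Zs = "\<Union>i\<le>n. U i"
  have close: "fibres_close (max D 0 + 1) a b"
    if i: "i \<le> n" and "x \<in> A i"
      and "a \<in> chain_component d r (A i) x" "b \<in> chain_component d r (A i) x"
    for i x a b
  proof (rule fibres_close_in_chain_component)
    show "r_separated (quotient_metric G d \<phi>) r (V i)" using V_sep i by blast
    show "\<forall>B\<in>V i. \<forall>q\<in>B. \<forall>q'\<in>B. quotient_metric G d \<phi> q q' \<le> D" using V_bdd i by blast
  qed (use that in \<open>auto simp: A_def\<close>)
  have piece: "\<exists>i x. i \<le> n \<and> x \<in> A i \<and> Z = chain_component d r (A i) x" if "Z \<in> ?Zs" for Z
    using that unfolding U_def by blast
  have "\<M> (nbhd_family (carrier G) d ?Zs m (real s))" if "1 \<le> m" "1 \<le> s" for m s :: nat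
  proof (rule nbhd_family_in_class[OF stable fg_in_M])
    show "\<forall>Z\<in>?Zs. Z \<noteq> {}"
      using piece chain_component_self by (metis empty_iff)
    show "\<forall>Z\<in>?Zs. Z \<subseteq> carrier G"
      using piece chain_component_subset A_G by (metis subset_trans)
    show "\<forall>Z\<in>?Zs. chain_connected d (max r (real s)) Z"
      using piece chain_connected_chain_component[OF sym] chain_connected_mono max.cobounded1
      by metis
    show "\<forall>Z\<in>?Zs. \<forall>a\<in>Z. \<forall>b\<in>Z. fibres_close (max D 0 + 1) a b"
      using piece close by metis
  qed auto
  then show "\<exists>U. carrier G = (\<Union>i\<le>n. \<Union>(U i)) \<and> (\<forall>i\<le>n. r_separated d r (U i)) \<and>
      (\<forall>m s. 1 \<le> m \<longrightarrow> 1 \<le> s \<longrightarrow> \<M> (nbhd_family (carrier G) d (\<Union>i\<le>n. U i) m (real s)))"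
    using cover sep by blast
qed

end

theorem proposition2p9:
  fixes \<M> :: "'g mspace set \<Rightarrow> bool"
    and P :: "('p, 'a) monoid_scheme"
    and G :: "('g, 'b) monoid_scheme"
    and Q :: "('q, 'c) monoid_scheme"
    and \<iota> :: "'p \<Rightarrow> 'g" and \<phi> :: "'g \<Rightarrow> 'q"
    and d :: "'g \<Rightarrow> 'g \<Rightarrow> real"
  assumes M_class: "class_of_metric_families \<M>"
    and M_stable: "stable_under_regular_maps \<M>"
    and grpP: "group P" and grpG: "group G" and grpQ: "group Q"
    and cntP: "countable (carrier P)" and cntG: "countable (carrier G)"
    and cntQ: "countable (carrier Q)"
    and iota_hom: "\<iota> \<in> hom P G" and iota_inj: "inj_on \<iota> (carrier P)"
    and phi_hom: "\<phi> \<in> hom G Q" and phi_surj: "\<phi> ` carrier G = carrier Q"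
    and exact: "\<iota> ` carrier P = kernel G Q \<phi>"
    and metric: "uniformly_discrete_proper_left_inv G d"
    and fg_in_M: "\<And>H. subgroup H P \<Longrightarrow> finitely_generated_subgroup P H \<Longrightarrow>
                     space_in \<M> (\<iota> ` H) d"
  shows "asdim_M \<M> (carrier G) d \<le> asdim (carrier Q) (quotient_metric G d \<phi>)"
proof -
  interpret metric_group_extension G Q P \<iota> \<phi> d
    using grpG grpQ grpP iota_hom iota_inj phi_hom exact metric
    by (simp add: metric_group_extension_def metric_group_extension_axioms_def)
  have "{n. asdim_le (carrier Q) (quotient_metric G d \<phi>) n} \<subseteq> {n. asdim_M_le \<M> (carrier G) d n}"
    using asdim_M_le_if_asdim_le[OF M_stable fg_in_M] by blast
  then show ?thesis unfolding asdim_M_def asdim_def by (intro Inf_superset_mono image_mono)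
qed

end
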